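(* Let $\mathbb F$ be a finite field and let $n,k,r$ be integers with $2\le r<k$. If $\mathcal C$ is an $(n,k,r,3)$-sequential locally repairable code (SLRC) over $\mathbb F$, then $$\frac{k}{n}\le\left(\frac{r}{r+1}\right)^2 .$$
   Context: Let $\mathcal C$ be an $[n,k]$ linear code over a finite field $\mathbb F$, with coordinates indexed by $[n]=\{1,\dots,n\}$. For $i\in[n]$, a set $R\subseteq[n]\setminus\{i\}$ is a recovering set of $i$ if there are nonzero $a_j\in\mathbb F$ ($j\in R$) with $x_i=\sum_{j\in R}a_jx_j$ for every codeword $x=(x_1,\dots,x_n)\in\mathcal C$. For $E\subseteq[n]$, $\mathcal C$ is $(E,r)$-recoverable if $E$ can be indexed as $E=\{i_1,\dots,i_{|E|}\}$ so that each $i_\ell$ has a recovering set $R_\ell\subseteq([n]\setminus E)\cup\{i_1,\dots,i_{\ell-1}\}$ with $|R_\ell|\le r$. $\mathcal C$ is an $(n,k,r,t)$-SLRC if it is $(E,r)$-recoverable for every $E\subseteq[n]$ with $|E|\le t$. *)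

theory Defs
  imports Complex_Main "HOL.Vector_Spaces" "HOL-Library.Function_Algebras"
begin

text \<open>Vectors of length n over a field F are modelled as functions nat => F supported on
  the coordinate set {1..n}.\<close>

definition coords :: "nat \<Rightarrow> nat set" where
  "coords n = {1..n}"

definition ambient :: "nat \<Rightarrow> (nat \<Rightarrow> 'a::field) set" where
  "ambient n = {x. \<forall>i. i \<notin> coords n \<longrightarrow> x i = 0}"

definition fscale :: "'a::field \<Rightarrow> (nat \<Rightarrow> 'a) \<Rightarrow> (nat \<Rightarrow> 'a)" where
  "fscale c x = (\<lambda>i. c * x i)"

definition linear_code :: "nat \<Rightarrow> nat \<Rightarrow> (nat \<Rightarrow> 'a::field) set \<Rightarrow> bool" where
  "linear_code n k C \<longleftrightarrow>
     C \<subseteq> ambient n \<and> 0 \<in> C \<and>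
     (\<forall>x\<in>C. \<forall>y\<in>C. x + y \<in> C) \<and>
     (\<forall>c. \<forall>x\<in>C. fscale c x \<in> C) \<and>
     vector_space.dim fscale C = k"

definition recovering_set ::
  "nat \<Rightarrow> (nat \<Rightarrow> 'a::field) set \<Rightarrow> nat \<Rightarrow> nat set \<Rightarrow> bool" where
  "recovering_set n C i R \<longleftrightarrow>
     R \<subseteq> coords n - {i} \<and>
     (\<exists>a. (\<forall>j\<in>R. a j \<noteq> 0) \<and> (\<forall>x\<in>C. x i = (\<Sum>j\<in>R. a j * x j)))"

definition E_r_recoverable ::
  "nat \<Rightarrow> (nat \<Rightarrow> 'a::field) set \<Rightarrow> nat set \<Rightarrow> nat \<Rightarrow> bool" where
  "E_r_recoverable n C E r \<longleftrightarrow>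
     (\<exists>es. distinct es \<and> set es = E \<and>
        (\<forall>l < length es. \<exists>R. recovering_set n C (es ! l) R \<and>
              R \<subseteq> (coords n - E) \<union> set (take l es) \<and> card R \<le> r))"

definition SLRC ::
  "nat \<Rightarrow> nat \<Rightarrow> nat \<Rightarrow> nat \<Rightarrow> (nat \<Rightarrow> 'a::field) set \<Rightarrow> bool" where
  "SLRC n k r t C \<longleftrightarrow> linear_code n k C \<and>
     (\<forall>E. E \<subseteq> coords n \<and> card E \<le> t \<longrightarrow> E_r_recoverable n C E r)"

end

theory Submission imports Defs begin

text \<open>
  Let \<open>B\<close> be a basis of the span of the dual codewords of weight at most \<open>r + 1\<close>
  (the local checks). Since these lie in the dual code, \<open>k + |B| \<le> n\<close>. Sequential
  recovery of any at most three erasures \<open>E\<close> starts with a check that is nonzero on exactly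
  one coordinate of \<open>E\<close>; so the span of \<open>B\<close> isolates every coordinate inside every set of
  at most three coordinates. A weighting of the incidences (coordinate \<open>i\<close>, row \<open>b\<close>) with
  \<open>b i \<noteq> 0\<close> gives every coordinate total weight at least \<open>2r + 1\<close> and every row total weight
  at most \<open>(r + 1)\<^sup>2\<close>. Hence \<open>(2r + 1) n \<le> (r + 1)\<^sup>2 |B| \<le> (r + 1)\<^sup>2 (n - k)\<close>,
  i.e. \<open>k (r + 1)\<^sup>2 \<le> r\<^sup>2 n\<close>.
\<close>

interpretation fs: vector_space "fscale :: 'a::field \<Rightarrow> (nat \<Rightarrow> 'a) \<Rightarrow> _"
  by unfold_locales (auto simp: fscale_def fun_eq_iff algebra_simps)

interpretation fsp: vector_space_pair
  "fscale :: 'a::field \<Rightarrow> (nat \<Rightarrow> 'a) \<Rightarrow> _" "fscale :: 'a::field \<Rightarrow> (nat \<Rightarrow> 'a) \<Rightarrow> _"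
  by unfold_locales

lemma finite_coords [simp]: "finite (coords n)"
  by (simp add: coords_def)

lemma card_coords [simp]: "card (coords n) = n"
  by (simp add: coords_def)

lemma sum_fun_apply: "(\<Sum>v\<in>B. f v) j = (\<Sum>v\<in>B. f v j)"
  by (induction B rule: infinite_finite_induct) auto

definition dot :: "nat \<Rightarrow> (nat \<Rightarrow> 'a::field) \<Rightarrow> (nat \<Rightarrow> 'a) \<Rightarrow> 'a" where
  "dot n h x = (\<Sum>j\<in>coords n. h j * x j)"

definition unit_vec :: "nat \<Rightarrow> nat \<Rightarrow> 'a::field" where
  "unit_vec j = (\<lambda>i. if i = j then 1 else 0)"

definition local_checks :: "nat \<Rightarrow> nat \<Rightarrow> (nat \<Rightarrow> 'a::field) set \<Rightarrow> (nat \<Rightarrow> 'a) set" where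
  "local_checks n r C =
     {h \<in> ambient n. card {j \<in> coords n. h j \<noteq> 0} \<le> r + 1 \<and> (\<forall>x\<in>C. dot n h x = 0)}"

lemma inj_unit_vec: "inj (unit_vec :: nat \<Rightarrow> nat \<Rightarrow> 'a::field)"
  by (rule injI) (auto simp: unit_vec_def fun_eq_iff split: if_splits)

lemma dot_unit_vec_left:
  assumes "p \<in> coords n"
  shows "dot n (unit_vec p) z = z p"
proof -
  have "dot n (unit_vec p) z = (\<Sum>j\<in>coords n. if j = p then z j else 0)"
    unfolding dot_def unit_vec_def by (intro sum.cong) auto
  also have "\<dots> = z p"
    using assms by (simp add: sum.delta')
  finally show ?thesis .
qed

lemma subspace_dot_left_eq_0: "fs.subspace {v. dot n v z = 0}"
  by (simp add: fs.subspace_def dot_def fscale_def distrib_right sum.distrib mult.assoc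
      flip: sum_distrib_left)

subsection \<open>Dimension count for the dual code\<close>

lemma in_span_unit_vecs:
  assumes "finite P" "\<forall>i. i \<notin> P \<longrightarrow> x i = (0::'a::field)"
  shows "x \<in> fs.span (unit_vec ` P)"
proof -
  have "x = (\<Sum>p\<in>P. fscale (x p) (unit_vec p))"
    using assms by (auto simp: fun_eq_iff sum_fun_apply fscale_def unit_vec_def if_distrib
        sum.delta cong: if_cong)
  also have "\<dots> \<in> fs.span (unit_vec ` P)"
    by (intro fs.span_sum fs.span_scale fs.span_base) simp
  finally show ?thesis .
qed

lemma ambient_subset_span_unit_vecs:
  "ambient n \<subseteq> fs.span (unit_vec ` coords n :: (nat \<Rightarrow> 'a::field) set)"
  by (auto simp: ambient_def intro: in_span_unit_vecs)

lemma eq_0_if_orthogonal_to_spanning_set: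
  fixes z :: "nat \<Rightarrow> 'a::field"
  assumes "z \<in> ambient n" "unit_vec ` coords n \<subseteq> fs.span V" "\<forall>v\<in>V. dot n v z = 0"
  shows "z = 0"
proof
  fix j
  show "z j = 0 j"
  proof (cases "j \<in> coords n")
    case True
    have "fs.span V \<subseteq> {v. dot n v z = 0}"
      using assms(3) by (intro fs.span_minimal subspace_dot_left_eq_0) auto
    then have "dot n (unit_vec j) z = 0"
      using assms(2) True by blast
    then show ?thesis
      using dot_unit_vec_left[OF True, of z] by simp
  next
    case False
    then show ?thesis
      using assms(1) by (simp add: ambient_def)
  qed
qed

text \<open>Restriction to \<open>P\<close> is an injective linear map from \<open>C\<close> into a space of dimension \<open>|P|\<close>.\<close>

lemma dim_le_card_if_vanishing_on_imp_0:
  fixes C :: "(nat \<Rightarrow> 'a::field) set"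
  assumes C: "fs.subspace C" and "finite P"
    and vanishing: "\<And>z. z \<in> C \<Longrightarrow> \<forall>p\<in>P. z p = 0 \<Longrightarrow> z = 0"
  shows "fs.dim C \<le> card P"
proof -
  define restrict where "restrict x = (\<lambda>i. if i \<in> P then x i else 0)" for x :: "nat \<Rightarrow> 'a"
  have linear: "Vector_Spaces.linear fscale fscale restrict"
    unfolding Vector_Spaces.linear_iff
    using fs.vector_space_axioms by (simp add: restrict_def fscale_def fun_eq_iff)
  have inj: "inj_on restrict C"
  proof (rule inj_onI)
    fix x y assume xy: "x \<in> C" "y \<in> C" "restrict x = restrict y"
    have "x - y \<in> C"
      using C xy(1,2) by (rule fs.subspace_diff)
    moreover have "\<forall>p\<in>P. (x - y) p = 0"
      using xy(3) by (simp add: restrict_def fun_eq_iff) metis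
    ultimately have "x - y = 0"
      by (rule vanishing)
    then show "x = y" by simp
  qed
  obtain D where D: "D \<subseteq> C" "fs.independent D" "C \<subseteq> fs.span D" "card D = fs.dim C"
    by (rule fs.basis_exists)
  have "fs.span D \<subseteq> C"
    using D(1) C by (rule fs.span_minimal)
  then have independent: "fs.independent (restrict ` D)"
    by (intro fsp.linear_independent_injective_image[OF linear D(2)] inj_on_subset[OF inj])
  have "restrict ` D \<subseteq> fs.span (unit_vec ` P)"
    using \<open>finite P\<close> by (auto simp: restrict_def intro!: in_span_unit_vecs)
  then have "card (restrict ` D) \<le> card (unit_vec ` P :: (nat \<Rightarrow> 'a) set)"
    using fs.independent_span_bound[OF finite_imageI[OF \<open>finite P\<close>] independent] by simp
  also have "\<dots> \<le> card P"
    using \<open>finite P\<close> by (rule card_image_le)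
  finally show ?thesis
    using D(4) card_image[OF inj_on_subset[OF inj D(1)]] by simp
qed

lemma extend_by_unit_vecs:
  fixes B :: "(nat \<Rightarrow> 'a::field) set"
  assumes "B \<subseteq> ambient n" "fs.independent B"
  obtains P where "P \<subseteq> coords n" "card B + card P \<le> n"
    "unit_vec ` coords n \<subseteq> fs.span (B \<union> unit_vec ` P)"
proof -
  let ?U = "unit_vec ` coords n :: (nat \<Rightarrow> 'a) set"
  obtain B' where B': "B \<subseteq> B'" "B' \<subseteq> B \<union> ?U" "fs.independent B'" "B \<union> ?U \<subseteq> fs.span B'"
    by (rule fs.maximal_independent_subset_extend[OF Un_upper1 assms(2)])
  have "B \<union> ?U \<subseteq> fs.span ?U"
    by (intro Un_least order_trans[OF assms(1) ambient_subset_span_unit_vecs] fs.span_superset)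
  then have "finite B' \<and> card B' \<le> card ?U"
    by (intro fs.independent_span_bound[OF finite_imageI[OF finite_coords] B'(3)]
        order_trans[OF B'(2)])
  then have "finite B'" "card B' \<le> n"
    using card_image_le[of "coords n" "unit_vec :: nat \<Rightarrow> nat \<Rightarrow> 'a"] by auto
  define P where "P = {p \<in> coords n. unit_vec p \<in> B' - B}"
  have B'_minus_B: "B' - B = unit_vec ` P"
    using B'(2) by (auto simp: P_def)
  have "card B' = card B + card (B' - B)"
    using B'(1) \<open>finite B'\<close> by (metis card_Diff_subset card_mono finite_subset le_add_diff_inverse)
  also have "card (B' - B) = card P"
    unfolding B'_minus_B by (rule card_image[OF inj_on_subset[OF inj_unit_vec subset_UNIV]])
  finally have "card B + card P \<le> n"
    using \<open>card B' \<le> n\<close> by simp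
  moreover have "B' = B \<union> unit_vec ` P"
    using B'(1) B'_minus_B by blast
  then have "?U \<subseteq> fs.span (B \<union> unit_vec ` P)"
    using B'(4) by simp
  moreover have "P \<subseteq> coords n"
    by (simp add: P_def)
  ultimately show ?thesis
    by (intro that)
qed

text \<open>A codeword vanishing on \<open>P\<close> is orthogonal to \<open>B \<union> unit_vec ` P\<close>, hence zero.\<close>

lemma dim_add_card_orthogonal_le:
  fixes C B :: "(nat \<Rightarrow> 'a::field) set"
  assumes C: "linear_code n k C" and B: "B \<subseteq> ambient n" "fs.independent B"
    and orthogonal: "\<forall>b\<in>B. \<forall>x\<in>C. dot n b x = 0"
  shows "k + card B \<le> n"
proof -
  obtain P where P: "P \<subseteq> coords n" "card B + card P \<le> n"
    "unit_vec ` coords n \<subseteq> fs.span (B \<union> unit_vec ` P)"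
    using extend_by_unit_vecs[OF B] by blast
  have C_subspace: "fs.subspace C" and "fs.dim C = k" and C_ambient: "C \<subseteq> ambient n"
    using C unfolding linear_code_def fs.subspace_def by blast+
  have "fs.dim C \<le> card P"
  proof (rule dim_le_card_if_vanishing_on_imp_0[OF C_subspace])
    show "finite P"
      using P(1) by (rule finite_subset) simp
    fix z assume z: "z \<in> C" "\<forall>p\<in>P. z p = 0"
    have "dot n v z = 0" if "v \<in> B \<union> unit_vec ` P" for v
      using that
    proof
      assume "v \<in> B"
      then show ?thesis
        using orthogonal z(1) by blast
    next
      assume "v \<in> unit_vec ` P"
      then obtain p where "p \<in> P" "v = unit_vec p"
        by blast
      then show ?thesis
        using z(2) P(1) dot_unit_vec_left[of p n z] by auto
    qed
    moreover have "z \<in> ambient n"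
      using z(1) C_ambient by blast
    ultimately show "z = 0"
      using P(3) by (intro eq_0_if_orthogonal_to_spanning_set) blast+
  qed
  with \<open>fs.dim C = k\<close> P(2) show ?thesis
    by linarith
qed

subsection \<open>Local checks isolating erased coordinates\<close>

text \<open>A recovering set \<open>R\<close> of \<open>i\<close> is the support of a dual codeword with \<open>i\<close> removed.\<close>

lemma recovering_set_imp_local_check:
  fixes C :: "(nat \<Rightarrow> 'a::field) set"
  assumes "recovering_set n C i R" "card R \<le> r" "i \<in> coords n"
  shows "\<exists>h\<in>local_checks n r C. h i \<noteq> 0 \<and> (\<forall>j. j \<notin> insert i R \<longrightarrow> h j = 0)"
proof -
  obtain a where a: "R \<subseteq> coords n - {i}" "\<forall>x\<in>C. x i = (\<Sum>j\<in>R. a j * x j)"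
    using assms(1) unfolding recovering_set_def by blast
  have "finite R" "i \<notin> R"
    using a(1) finite_subset[of R "coords n"] by auto
  define h where "h = (\<lambda>j. if j = i then 1 else if j \<in> R then - a j else (0::'a))"
  have "{j \<in> coords n. h j \<noteq> 0} \<subseteq> insert i R"
    by (auto simp: h_def)
  then have "card {j \<in> coords n. h j \<noteq> 0} \<le> card (insert i R)"
    using \<open>finite R\<close> by (intro card_mono) auto
  also have "\<dots> \<le> r + 1"
    using \<open>finite R\<close> assms(2) by (simp add: card_insert_if)
  finally have "card {j \<in> coords n. h j \<noteq> 0} \<le> r + 1" .
  moreover have "dot n h x = 0" if "x \<in> C" for x
  proof -
    have "dot n h x = (\<Sum>j\<in>insert i R. h j * x j)"
      unfolding dot_def using a(1) assms(3)
      by (intro sum.mono_neutral_right) (auto simp: h_def)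
    also have "\<dots> = h i * x i + (\<Sum>j\<in>R. h j * x j)"
      using \<open>finite R\<close> \<open>i \<notin> R\<close> by simp
    also have "(\<Sum>j\<in>R. h j * x j) = (\<Sum>j\<in>R. - (a j * x j))"
      using \<open>i \<notin> R\<close> by (intro sum.cong) (auto simp: h_def)
    finally show ?thesis
      using a(2) that by (simp add: h_def sum_negf)
  qed
  moreover have "h \<in> ambient n"
    using a(1) assms(3) by (auto simp: ambient_def h_def)
  ultimately have "h \<in> local_checks n r C"
    by (simp add: local_checks_def)
  moreover have "h i \<noteq> 0" "\<forall>j. j \<notin> insert i R \<longrightarrow> h j = 0"
    by (simp_all add: h_def)
  ultimately show ?thesis
    by blast
qed

text \<open>The first erasure repaired has a recovering set outside \<open>E\<close>.\<close>

lemma recoverable_imp_isolating_check: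
  fixes C :: "(nat \<Rightarrow> 'a::field) set"
  assumes "E_r_recoverable n C E r" "E \<noteq> {}" "E \<subseteq> coords n"
  shows "\<exists>e\<in>E. \<exists>h\<in>local_checks n r C. h e \<noteq> 0 \<and> (\<forall>e'\<in>E. e' \<noteq> e \<longrightarrow> h e' = 0)"
proof -
  obtain es where es: "distinct es" "set es = E"
    "\<forall>l < length es. \<exists>R. recovering_set n C (es ! l) R \<and>
              R \<subseteq> (coords n - E) \<union> set (take l es) \<and> card R \<le> r"
    using assms(1) unfolding E_r_recoverable_def by blast
  define i where "i = es ! 0"
  have "es \<noteq> []"
    using es(2) assms(2) by auto
  then obtain R where R: "recovering_set n C i R" "R \<subseteq> coords n - E" "card R \<le> r"
    using es(3) by (fastforce simp: i_def)
  have "i \<in> E"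
    using \<open>es \<noteq> []\<close> es(2) by (auto simp: i_def)
  then obtain h where "h \<in> local_checks n r C" "h i \<noteq> 0" "\<forall>j. j \<notin> insert i R \<longrightarrow> h j = 0"
    using recovering_set_imp_local_check[OF R(1,3)] assms(3) by blast
  then show ?thesis
    using \<open>i \<in> E\<close> R(2) by blast
qed

subsection \<open>Double counting\<close>

locale isolating_rows =
  fixes B :: "(nat \<Rightarrow> 'a::field) set" and n r :: nat
  assumes finite_rows: "finite B"
    and row_support: "\<And>b. b \<in> B \<Longrightarrow> card {j \<in> coords n. b j \<noteq> 0} \<le> r + 1"
    and r_pos: "1 \<le> r"
    and isolates: "\<And>E. E \<subseteq> coords n \<Longrightarrow> card E \<le> 3 \<Longrightarrow> E \<noteq> {} \<Longrightarrow>
       \<exists>e\<in>E. \<exists>u. (\<Sum>b\<in>B. u b * b e) \<noteq> 0 \<and> (\<forall>e'\<in>E. e' \<noteq> e \<longrightarrow> (\<Sum>b\<in>B. u b * b e') = 0)"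
begin

definition rows_at :: "nat \<Rightarrow> (nat \<Rightarrow> 'a) set" where
  "rows_at i = {b \<in> B. b i \<noteq> 0}"

definition single_coords :: "nat set" where
  "single_coords = {i \<in> coords n. card (rows_at i) = 1}"

definition single_rows :: "(nat \<Rightarrow> 'a) set" where
  "single_rows = {b \<in> B. \<exists>i\<in>single_coords. b i \<noteq> 0}"

text \<open>A single coordinate is paid \<open>r + 1\<close> extra by its only row, which meets no other single
  coordinate; a coordinate with exactly two rows is paid one extra unit by a row meeting no
  single coordinate.\<close>

definition weight :: "nat \<Rightarrow> (nat \<Rightarrow> 'a) \<Rightarrow> nat" where
  "weight i b = r + (if b \<in> single_rows then 0 else 1) + (if i \<in> single_coords then r + 1 else 0)"

lemma finite_rows_at: "finite (rows_at i)"
  using finite_rows by (simp add: rows_at_def)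

lemma sum_rows_eq_sum_rows_at: "(\<Sum>b\<in>B. u b * b i) = (\<Sum>b\<in>rows_at i. u b * b i)"
  using finite_rows by (intro sum.mono_neutral_right) (auto simp: rows_at_def)

lemma rows_at_nonempty:
  assumes "i \<in> coords n"
  shows "rows_at i \<noteq> {}"
proof
  assume "rows_at i = {}"
  then show False
    using isolates[of "{i}"] assms by (simp add: sum_rows_eq_sum_rows_at)
qed

lemma rows_at_single_coord:
  assumes "i \<in> single_coords" "b \<in> B" "b i \<noteq> 0"
  shows "rows_at i = {b}"
proof -
  have "card (rows_at i) = 1"
    using assms(1) by (simp add: single_coords_def)
  then obtain c where "rows_at i = {c}"
    by (rule card_1_singletonE)
  moreover have "b \<in> rows_at i"
    using assms(2,3) by (simp add: rows_at_def)
  ultimately show ?thesis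
    by simp
qed

lemma single_coord_unique:
  assumes "i \<in> single_coords" "i' \<in> single_coords" "b \<in> B" "b i \<noteq> 0" "b i' \<noteq> 0"
  shows "i = i'"
proof (rule ccontr)
  assume "i \<noteq> i'"
  have sub: "{i, i'} \<subseteq> coords n"
    using assms(1,2) by (simp add: single_coords_def)
  have card: "card {i, i'} \<le> 3"
    by (simp add: card_insert_if)
  obtain e u where "e \<in> {i, i'}" "(\<Sum>b\<in>B. u b * b e) \<noteq> 0"
     "\<forall>e'\<in>{i, i'}. e' \<noteq> e \<longrightarrow> (\<Sum>b\<in>B. u b * b e') = 0"
    using isolates[OF sub card] by blast
  moreover have "(\<Sum>b\<in>B. u b * b i) = 0 \<longleftrightarrow> u b = 0" "(\<Sum>b\<in>B. u b * b i') = 0 \<longleftrightarrow> u b = 0"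
    using assms rows_at_single_coord[OF assms(1,3,4)] rows_at_single_coord[OF assms(2,3,5)]
    by (simp_all add: sum_rows_eq_sum_rows_at)
  ultimately show False
    using \<open>i \<noteq> i'\<close> by auto
qed

text \<open>If both rows at \<open>i\<close> met single coordinates \<open>j\<^sub>1, j\<^sub>2\<close>, no combination could isolate a
  coordinate of \<open>{j\<^sub>1, i, j\<^sub>2}\<close>.\<close>

lemma two_rows_at_not_both_single:
  assumes "i \<in> coords n" "rows_at i = {b1, b2}" "b1 \<noteq> b2"
  shows "b1 \<notin> single_rows \<or> b2 \<notin> single_rows"
proof (rule ccontr)
  assume "\<not> ?thesis"
  then obtain j1 j2 where j: "j1 \<in> single_coords" "b1 j1 \<noteq> 0" "j2 \<in> single_coords" "b2 j2 \<noteq> 0"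
    and "b1 \<in> B" "b2 \<in> B"
    by (auto simp: single_rows_def)
  have rows_j: "rows_at j1 = {b1}" "rows_at j2 = {b2}"
    using rows_at_single_coord[OF j(1) \<open>b1 \<in> B\<close> j(2)] rows_at_single_coord[OF j(3) \<open>b2 \<in> B\<close> j(4)]
    by simp_all
  have "i \<notin> single_coords"
    using assms by (simp add: single_coords_def)
  then have j_distinct: "j1 \<noteq> i" "j2 \<noteq> i" "j1 \<noteq> j2"
    using j rows_j assms by auto
  have sub: "{j1, i, j2} \<subseteq> coords n"
    using assms(1) j(1,3) by (simp add: single_coords_def)
  have card: "card {j1, i, j2} \<le> 3"
    by (simp add: card_insert_if)
  obtain e u where e: "e \<in> {j1, i, j2}" "(\<Sum>b\<in>B. u b * b e) \<noteq> 0"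
     "\<forall>e'\<in>{j1, i, j2}. e' \<noteq> e \<longrightarrow> (\<Sum>b\<in>B. u b * b e') = 0"
    using isolates[OF sub card] by blast
  have vanish: "(\<Sum>b\<in>B. u b * b e') = 0" if "e' \<in> {j1, i, j2}" "e' \<noteq> e" for e'
    using e(3) that by blast
  have "b1 i \<noteq> 0" "b2 i \<noteq> 0"
    using assms(2) by (auto simp: rows_at_def)
  have at_j1: "(\<Sum>b\<in>B. u b * b j1) = 0 \<longleftrightarrow> u b1 = 0"
    and at_j2: "(\<Sum>b\<in>B. u b * b j2) = 0 \<longleftrightarrow> u b2 = 0"
    using rows_j j by (simp_all add: sum_rows_eq_sum_rows_at)
  have at_i: "(\<Sum>b\<in>B. u b * b i) = u b1 * b1 i + u b2 * b2 i"
    using assms(2,3) by (simp add: sum_rows_eq_sum_rows_at)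
  consider "e = j1" | "e = i" | "e = j2"
    using e(1) by blast
  then show False
  proof cases
    case 1
    with e(2) vanish[of j2] vanish[of i] at_j1 at_j2 at_i j_distinct \<open>b1 i \<noteq> 0\<close> show False
      by auto
  next
    case 2
    with e(2) vanish[of j1] vanish[of j2] at_j1 at_j2 at_i j_distinct show False
      by auto
  next
    case 3
    with e(2) vanish[of j1] vanish[of i] at_j1 at_j2 at_i j_distinct \<open>b2 i \<noteq> 0\<close> show False
      by auto
  qed
qed

lemma coord_weight_ge:
  assumes "i \<in> coords n"
  shows "2 * r + 1 \<le> (\<Sum>b\<in>rows_at i. weight i b)"
proof -
  have weight_ge: "r \<le> weight i b" for b
    by (simp add: weight_def)
  have "card (rows_at i) \<noteq> 0"
    using rows_at_nonempty[OF assms] finite_rows_at by simp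
  then consider "card (rows_at i) = 1" | "card (rows_at i) = 2" | "card (rows_at i) \<ge> 3"
    by linarith
  then show ?thesis
  proof cases
    case 1
    then obtain b where "rows_at i = {b}"
      by (auto simp: card_Suc_eq)
    moreover have "i \<in> single_coords"
      using 1 assms by (simp add: single_coords_def)
    ultimately show ?thesis
      by (simp add: weight_def)
  next
    case 2
    then obtain b1 b2 where b: "rows_at i = {b1, b2}" "b1 \<noteq> b2"
      by (auto simp: card_Suc_eq numeral_2_eq_2)
    then have "b1 \<notin> single_rows \<or> b2 \<notin> single_rows"
      using two_rows_at_not_both_single assms by blast
    then show ?thesis
      using b weight_ge[of b1] weight_ge[of b2] by (auto simp: weight_def)
  next
    case 3
    have "card (rows_at i) * r \<le> (\<Sum>b\<in>rows_at i. weight i b)"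
      using sum_bounded_below[of "rows_at i" r "weight i"] weight_ge by (simp add: mult.commute)
    moreover have "3 * r \<le> card (rows_at i) * r"
      using 3 by simp
    ultimately show ?thesis
      using r_pos by linarith
  qed
qed

lemma row_weight_le:
  assumes "b \<in> B"
  shows "(\<Sum>i\<in>{j \<in> coords n. b j \<noteq> 0}. weight i b) \<le> (r + 1)\<^sup>2"
proof -
  define T where "T = {j \<in> coords n. b j \<noteq> 0}"
  have "card T \<le> r + 1"
    using row_support assms by (simp add: T_def)
  show ?thesis
  proof (cases "b \<in> single_rows")
    case True
    have "card (T \<inter> single_coords) \<le> 1"
      using single_coord_unique[OF _ _ assms] by (auto simp: T_def card_le_Suc0_iff_eq)
    have "(\<Sum>i\<in>T. weight i b) = card T * r + (r + 1) * card (T \<inter> single_coords)"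
      using True by (simp add: weight_def sum.distrib sum.If_cases T_def)
    also have "\<dots> \<le> (r + 1) * r + (r + 1) * 1"
      using \<open>card T \<le> r + 1\<close> \<open>card (T \<inter> single_coords) \<le> 1\<close> by (intro add_mono mult_mono) auto
    finally show ?thesis
      by (simp add: T_def power2_eq_square algebra_simps)
  next
    case False
    then have "T \<inter> single_coords = {}"
      using assms by (auto simp: single_rows_def T_def)
    then have "(\<Sum>i\<in>T. weight i b) = (\<Sum>i\<in>T. r + 1)"
      using False by (intro sum.cong) (auto simp: weight_def)
    also have "\<dots> = card T * (r + 1)"
      by simp
    also have "\<dots> \<le> (r + 1) * (r + 1)"
      using \<open>card T \<le> r + 1\<close> by (rule mult_le_mono1)
    finally show ?thesis
      by (simp add: T_def power2_eq_square)
  qed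
qed

lemma coords_rows_count: "(2 * r + 1) * n \<le> (r + 1)\<^sup>2 * card B"
proof -
  have "(2 * r + 1) * n = (\<Sum>i\<in>coords n. 2 * r + 1)"
    by simp
  also have "\<dots> \<le> (\<Sum>i\<in>coords n. \<Sum>b\<in>rows_at i. weight i b)"
    by (intro sum_mono coord_weight_ge)
  also have "\<dots> = (\<Sum>i\<in>coords n. \<Sum>b\<in>B. if b i \<noteq> 0 then weight i b else 0)"
    unfolding rows_at_def by (simp only: sum.inter_filter[OF finite_rows])
  also have "\<dots> = (\<Sum>b\<in>B. \<Sum>i\<in>coords n. if b i \<noteq> 0 then weight i b else 0)"
    by (rule sum.swap)
  also have "\<dots> = (\<Sum>b\<in>B. \<Sum>i\<in>{j \<in> coords n. b j \<noteq> 0}. weight i b)"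
    by (simp only: sum.inter_filter[OF finite_coords])
  also have "\<dots> \<le> (\<Sum>b\<in>B. (r + 1)\<^sup>2)"
    by (intro sum_mono row_weight_le)
  finally show ?thesis
    by (simp add: mult.commute)
qed

end

subsection \<open>The rate bound\<close>

lemma isolating_rows_if_spanning_local_checks:
  fixes C :: "(nat \<Rightarrow> 'a::field) set"
  assumes recoverable: "\<And>E. E \<subseteq> coords n \<Longrightarrow> card E \<le> 3 \<Longrightarrow> E_r_recoverable n C E r"
    and "1 \<le> r" "finite B" "B \<subseteq> local_checks n r C" "local_checks n r C \<subseteq> fs.span B"
  shows "isolating_rows B n r"
proof
  fix E assume E: "E \<subseteq> coords n" "card E \<le> 3" "E \<noteq> {}"
  obtain e h where eh: "e \<in> E" "h \<in> local_checks n r C" "h e \<noteq> 0" "\<forall>e'\<in>E. e' \<noteq> e \<longrightarrow> h e' = 0"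
    using recoverable_imp_isolating_check[OF recoverable[OF E(1,2)] E(3,1)] by blast
  then obtain u where "h = (\<Sum>b\<in>B. fscale (u b) b)"
    using assms(3,5) fs.span_finite by blast
  then have h_eq: "h j = (\<Sum>b\<in>B. u b * b j)" for j
    by (simp add: sum_fun_apply fscale_def)
  have "(\<Sum>b\<in>B. u b * b e) \<noteq> 0" "\<forall>e'\<in>E. e' \<noteq> e \<longrightarrow> (\<Sum>b\<in>B. u b * b e') = 0"
    using eh(3,4) by (simp_all flip: h_eq)
  with eh(1) show "\<exists>e\<in>E. \<exists>u. (\<Sum>b\<in>B. u b * b e) \<noteq> 0 \<and> (\<forall>e'\<in>E. e' \<noteq> e \<longrightarrow> (\<Sum>b\<in>B. u b * b e') = 0)"
    by blast
next
  show "\<And>b. b \<in> B \<Longrightarrow> card {j \<in> coords n. b j \<noteq> 0} \<le> r + 1"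
    using assms(4) by (auto simp: local_checks_def)
qed (use assms in simp_all)

lemma rate_le_if_counts:
  fixes k m n r :: nat
  assumes count: "(2 * r + 1) * n \<le> (r + 1)\<^sup>2 * m" and dim: "k + m \<le> n"
  shows "real k / real n \<le> (real r / (real r + 1))\<^sup>2"
proof (cases "n = 0")
  case False
  have "n * (r + 1)\<^sup>2 = r\<^sup>2 * n + (2 * r + 1) * n"
    by (simp add: power2_eq_square algebra_simps)
  moreover have "k * (r + 1)\<^sup>2 + m * (r + 1)\<^sup>2 \<le> n * (r + 1)\<^sup>2"
    using mult_le_mono1[OF dim, of "(r + 1)\<^sup>2"] by (simp add: algebra_simps)
  ultimately have nat_bound: "k * (r + 1)\<^sup>2 \<le> r\<^sup>2 * n"
    using count by (simp add: mult.commute)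
  have "real k * (real r + 1)\<^sup>2 \<le> real r ^ 2 * real n"
    using of_nat_mono[where 'a = real, OF nat_bound] by (simp add: add.commute)
  then have "real k / real n \<le> real r ^ 2 / (real r + 1)\<^sup>2"
    using False by (simp add: pos_divide_le_eq pos_le_divide_eq mult.commute mult.left_commute)
  then show ?thesis
    by (simp add: power_divide)
qed simp

theorem theorem1:
  fixes C :: "(nat \<Rightarrow> 'a::{field,finite}) set" and n k r :: nat
  assumes "2 \<le> r" and "r < k"
    and "SLRC n k r 3 C"
  shows "real k / real n \<le> (real r / (real r + 1)) ^ 2"
proof -
  have code: "linear_code n k C"
    and recoverable: "\<And>E. E \<subseteq> coords n \<Longrightarrow> card E \<le> 3 \<Longrightarrow> E_r_recoverable n C E r"
    using assms(3) by (simp_all add: SLRC_def)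
  obtain B where B: "B \<subseteq> local_checks n r C" "fs.independent B" "local_checks n r C \<subseteq> fs.span B"
    by (rule fs.maximal_independent_subset)
  have B_ambient: "B \<subseteq> ambient n"
    and orthogonal: "\<forall>b\<in>B. \<forall>x\<in>C. dot n b x = 0"
    using B(1) by (auto simp: local_checks_def)
  have "finite B"
    using fs.independent_span_bound[OF finite_imageI[OF finite_coords] B(2)
        order_trans[OF B_ambient ambient_subset_span_unit_vecs]] by simp
  moreover have "1 \<le> r"
    using assms(1) by simp
  ultimately have "isolating_rows B n r"
    using isolating_rows_if_spanning_local_checks[OF recoverable] B(1,3) by blast
  then have "(2 * r + 1) * n \<le> (r + 1)\<^sup>2 * card B"
    by (rule isolating_rows.coords_rows_count)
  moreover have "k + card B \<le> n"
    using code B_ambient B(2) orthogonal by (rule dim_add_card_orthogonal_le)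
  ultimately show ?thesis
    by (rule rate_le_if_counts)
qed

end
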